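(* Let $n\ge 1$, $\rho\in(0,1)$ and $a\in(0,1)$ with $2^n a\in\mathbb Z$. Then $\mathbf{MaxStab}_\Phi(a)\le \Gamma_\rho(a)$, where $$\Gamma_\rho(a):=\sup_{P_{Z|S}}\ \mathbb E[\Phi(a+\rho Z)]\quad\text{s.t.}\quad 0\le a+\rho Z\le 1\ \text{a.s.},\quad \mathbb E[Z]=0,\quad \mathbb E[Z^2]\le \mathbb E[SZ],$$ the supremum being over all conditional probability mass functions $P_{Z|S}$ (with $Z$ real-valued), where $(S,Z)\sim P_SP_{Z|S}$ and $S$ has distribution $P_S(-a)=1-a$, $P_S(1-a)=a$.
   Context: Let $n\ge1$, $\rho\in[0,1]$. Let $\mathbf X$ be uniformly distributed on $\{-1,1\}^n$ and let $\mathbf Y$ be obtained from $\mathbf X$ by independently flipping the sign of each coordinate with probability $(1-\rho)/2$. For a Boolean function $f:\{-1,1\}^n\to\{0,1\}$ define $T_\rho f(\mathbf x)=\mathbb E[f(\mathbf Y)\mid \mathbf X=\mathbf x]$. Let $\Phi:[0,1]\to\mathbb R$ be continuous and strictly convex. The $\Phi$-stability is $\mathbf{Stab}_\Phi[f]=\mathbb E[\Phi(T_\rho f(\mathbf X))]$, and for $a\in 2^{-n}\{0,1,\dots,2^n\}$, $\mathbf{MaxStab}_\Phi(a)=\max\{\mathbf{Stab}_\Phi[f]: f:\{-1,1\}^n\to\{0,1\},\ \mathbb E f(\mathbf X)=a\}$. *)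

theory Defs
  imports "HOL-Analysis.Analysis" "HOL-Probability.Probability"
begin

definition strictly_convex_on :: "real set \<Rightarrow> (real \<Rightarrow> real) \<Rightarrow> bool" where
  "strictly_convex_on S f \<longleftrightarrow>
     (\<forall>x\<in>S. \<forall>y\<in>S. x \<noteq> y \<longrightarrow>
        (\<forall>t::real. 0 < t \<and> t < 1 \<longrightarrow> f ((1 - t) * x + t * y) < (1 - t) * f x + t * f y))"

text \<open>The hypercube: a point of the n-cube is a bool list of length n
  (True stands for +1, False for -1).\<close>
definition cube :: "nat \<Rightarrow> bool list set" where
  "cube n = {xs. length xs = n}"

definition noise_kernel :: "real \<Rightarrow> bool list \<Rightarrow> bool list \<Rightarrow> real" where
  "noise_kernel \<rho> x y = (\<Prod>i<length x. if x ! i = y ! i then (1 + \<rho>) / 2 else (1 - \<rho>) / 2)"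

definition T_noise :: "nat \<Rightarrow> real \<Rightarrow> (bool list \<Rightarrow> real) \<Rightarrow> bool list \<Rightarrow> real" where
  "T_noise n \<rho> f x = (\<Sum>y\<in>cube n. noise_kernel \<rho> x y * f y)"

definition cube_mean :: "nat \<Rightarrow> (bool list \<Rightarrow> real) \<Rightarrow> real" where
  "cube_mean n g = (\<Sum>x\<in>cube n. g x) / 2 ^ n"

definition Stab :: "(real \<Rightarrow> real) \<Rightarrow> nat \<Rightarrow> real \<Rightarrow> (bool list \<Rightarrow> real) \<Rightarrow> real" where
  "Stab \<Phi> n \<rho> f = cube_mean n (\<lambda>x. \<Phi> (T_noise n \<rho> f x))"

definition bool_funs :: "nat \<Rightarrow> (bool list \<Rightarrow> real) set" where
  "bool_funs n = cube n \<rightarrow>\<^sub>E {0, 1}"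

definition MaxStab :: "(real \<Rightarrow> real) \<Rightarrow> nat \<Rightarrow> real \<Rightarrow> real \<Rightarrow> real" where
  "MaxStab \<Phi> n \<rho> a = Max {Stab \<Phi> n \<rho> f | f. f \<in> bool_funs n \<and> cube_mean n f = a}"

definition S_pmf :: "real \<Rightarrow> real pmf" where
  "S_pmf a = map_pmf (\<lambda>b. if b then 1 - a else - a) (bernoulli_pmf a)"

text \<open>Joint law of (S,Z) ~ P_S P_{Z|S}, where K s is the conditional pmf of Z given S = s.\<close>
definition joint_SZ :: "real \<Rightarrow> (real \<Rightarrow> real pmf) \<Rightarrow> (real \<times> real) pmf" where
  "joint_SZ a K = bind_pmf (S_pmf a) (\<lambda>s. map_pmf (\<lambda>z. (s, z)) (K s))"

definition Gamma_feasible :: "real \<Rightarrow> real \<Rightarrow> (real \<Rightarrow> real pmf) \<Rightarrow> bool" where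
  "Gamma_feasible \<rho> a K \<longleftrightarrow>
     (\<forall>(s, z) \<in> set_pmf (joint_SZ a K). 0 \<le> a + \<rho> * z \<and> a + \<rho> * z \<le> 1) \<and>
     measure_pmf.expectation (joint_SZ a K) (\<lambda>(s, z). z) = 0 \<and>
     measure_pmf.expectation (joint_SZ a K) (\<lambda>(s, z). z ^ 2)
        \<le> measure_pmf.expectation (joint_SZ a K) (\<lambda>(s, z). s * z)"

definition Gamma_rho :: "(real \<Rightarrow> real) \<Rightarrow> real \<Rightarrow> real \<Rightarrow> real" where
  "Gamma_rho \<Phi> \<rho> a = Sup {measure_pmf.expectation (joint_SZ a K) (\<lambda>(s, z). \<Phi> (a + \<rho> * z)) | K. Gamma_feasible \<rho> a K}"

end

theory Submission
  imports Defs
begin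

text \<open>
  Given a Boolean function f with mean a, let X be uniform on the cube and put
  S = f(X) - a and Z = (T_rho f(X) - a) / rho. The conditional law of Z given S is a
  feasible kernel: a + rho Z = T_rho f(X) lies in [0,1], E Z = 0, and in the Walsh basis,
  with Fourier coefficients c_U of f,
  E (T_rho f - a)^2 = sum over U nonempty of rho^(2|U|) c_U^2
    <= rho * sum over U nonempty of rho^|U| c_U^2 = rho * E (f - a)(T_rho f - a),
  which is E Z^2 <= E S Z. The objective value of this kernel is exactly the stability of f.
\<close>

subsection \<open>Walsh characters\<close>

definition sign_bool :: "bool \<Rightarrow> real" where
  "sign_bool b = (if b then 1 else -1)"

definition walsh :: "nat set \<Rightarrow> bool list \<Rightarrow> real" where
  "walsh S x = (\<Prod>i\<in>S. sign_bool (x ! i))"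

lemma finite_cube: "finite (cube n)"
  using finite_lists_length_eq[of "UNIV :: bool set" n] by (simp add: cube_def)

lemma card_cube: "card (cube n) = 2 ^ n"
  using card_lists_length_eq[of "UNIV :: bool set" n] by (simp add: cube_def)

lemma cube_nonempty: "cube n \<noteq> {}"
  using card_cube[of n] by auto

lemma walsh_mult_self: "walsh S x * walsh S x = 1"
  unfolding walsh_def prod.distrib[symmetric] by (rule prod.neutral) (simp add: sign_bool_def)

lemma walsh_mult:
  assumes "finite S" "finite T"
  shows "walsh S x * walsh T x = walsh ((S - T) \<union> (T - S)) x"
proof -
  have S: "walsh S x = walsh (S - T) x * walsh (S \<inter> T) x"
    unfolding walsh_def using assms prod.subset_diff[of "S \<inter> T" S] by (simp add: Diff_Int)
  have T: "walsh T x = walsh (T - S) x * walsh (S \<inter> T) x"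
    unfolding walsh_def using assms prod.subset_diff[of "S \<inter> T" T] by (simp add: Diff_Int Int_commute)
  have "walsh ((S - T) \<union> (T - S)) x = walsh (S - T) x * walsh (T - S) x"
    unfolding walsh_def using assms by (subst prod.union_disjoint) auto
  then show ?thesis
    unfolding S T using walsh_mult_self[of "S \<inter> T" x] by (simp add: algebra_simps)
qed

lemma sum_walsh:
  assumes "U \<subseteq> {..<n}"
  shows "(\<Sum>x\<in>cube n. walsh U x) = (if U = {} then 2 ^ n else 0)"
proof (cases "U = {}")
  case True
  then show ?thesis by (simp add: walsh_def card_cube)
next
  case False
  then obtain j where j: "j \<in> U" by blast
  with assms have "j < n" by auto
  have fin: "finite U" using assms finite_subset by blast
  define flip where "flip x = x[j := \<not> x ! j]" for x :: "bool list"
  have flip_cube: "flip x \<in> cube n" "flip (flip x) = x" if "x \<in> cube n" for x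
    using that \<open>j < n\<close> by (simp_all add: flip_def cube_def)
  have walsh_flip: "walsh U (flip x) = - walsh U x" if "x \<in> cube n" for x
  proof -
    have "(\<Prod>i\<in>U - {j}. sign_bool (flip x ! i)) = (\<Prod>i\<in>U - {j}. sign_bool (x ! i))"
      by (rule prod.cong) (auto simp: flip_def)
    moreover have "sign_bool (flip x ! j) = - sign_bool (x ! j)"
      using that \<open>j < n\<close> by (simp add: flip_def cube_def sign_bool_def)
    ultimately show ?thesis unfolding walsh_def using fin j by (simp add: prod.remove)
  qed
  have "(\<Sum>x\<in>cube n. walsh U x) = (\<Sum>x\<in>cube n. walsh U (flip x))"
    by (rule sum.reindex_bij_witness[where i = flip and j = flip]) (auto simp: flip_cube)
  also have "\<dots> = - (\<Sum>x\<in>cube n. walsh U x)"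
    by (simp add: walsh_flip sum_negf)
  finally show ?thesis using False by simp
qed

lemma sum_walsh_mult:
  assumes "S \<subseteq> {..<n}" "T \<subseteq> {..<n}"
  shows "(\<Sum>x\<in>cube n. walsh S x * walsh T x) = (if S = T then 2 ^ n else 0)"
proof -
  have "finite S" "finite T" using assms finite_subset by blast+
  then have "(\<Sum>x\<in>cube n. walsh S x * walsh T x) = (\<Sum>x\<in>cube n. walsh ((S - T) \<union> (T - S)) x)"
    by (simp add: walsh_mult)
  also have "\<dots> = (if (S - T) \<union> (T - S) = {} then 2 ^ n else 0)"
    by (rule sum_walsh) (use assms in auto)
  also have "((S - T) \<union> (T - S) = {}) = (S = T)" by blast
  finally show ?thesis .
qed

lemma sum_walsh_expansion:
  "(\<Sum>x\<in>cube n. \<Sum>S\<in>Pow {..<n}. c S * walsh S x) = 2 ^ n * c {}"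
proof -
  have "(\<Sum>x\<in>cube n. \<Sum>S\<in>Pow {..<n}. c S * walsh S x)
      = (\<Sum>S\<in>Pow {..<n}. c S * (if S = {} then 2 ^ n else 0))"
    by (subst sum.swap) (simp add: sum_distrib_left[symmetric] sum_walsh)
  also have "\<dots> = 2 ^ n * c {}" by (simp add: if_distrib cong: if_cong)
  finally show ?thesis .
qed

lemma sum_walsh_expansion_squared:
  "(\<Sum>x\<in>cube n. (\<Sum>S\<in>Pow {..<n}. c S * walsh S x)\<^sup>2) = 2 ^ n * (\<Sum>S\<in>Pow {..<n}. (c S)\<^sup>2)"
proof -
  have "(\<Sum>x\<in>cube n. (\<Sum>S\<in>Pow {..<n}. c S * walsh S x)\<^sup>2)
      = (\<Sum>S\<in>Pow {..<n}. \<Sum>T\<in>Pow {..<n}. c S * c T * (\<Sum>x\<in>cube n. walsh S x * walsh T x))"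
    by (simp add: power2_eq_square sum_product sum_distrib_left algebra_simps sum.swap[of _ "cube n"])
  also have "\<dots> = (\<Sum>S\<in>Pow {..<n}. \<Sum>T\<in>Pow {..<n}. if S = T then c S * c S * 2 ^ n else 0)"
    by (intro sum.cong refl) (simp add: sum_walsh_mult)
  also have "\<dots> = 2 ^ n * (\<Sum>S\<in>Pow {..<n}. (c S)\<^sup>2)"
    by (simp add: sum_distrib_left power2_eq_square mult.commute)
  finally show ?thesis .
qed

subsection \<open>Fourier expansion of the noise operator\<close>

definition fourier_coeff :: "nat \<Rightarrow> (bool list \<Rightarrow> real) \<Rightarrow> nat set \<Rightarrow> real" where
  "fourier_coeff n f S = (\<Sum>y\<in>cube n. walsh S y * f y) / 2 ^ n"

lemma fourier_coeff_empty: "fourier_coeff n f {} = cube_mean n f"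
  by (simp add: fourier_coeff_def cube_mean_def walsh_def)

lemma noise_kernel_walsh_expansion:
  assumes "x \<in> cube n"
  shows "noise_kernel \<rho> x y = (\<Sum>S\<in>Pow {..<n}. \<rho> ^ card S * walsh S x * walsh S y) / 2 ^ n"
proof -
  have "length x = n" using assms by (simp add: cube_def)
  then have "noise_kernel \<rho> x y = (\<Prod>i<n. (\<rho> * (sign_bool (x ! i) * sign_bool (y ! i)) + 1) / 2)"
    unfolding noise_kernel_def by (intro prod.cong) (auto simp: sign_bool_def)
  also have "\<dots> = (\<Prod>i<n. \<rho> * (sign_bool (x ! i) * sign_bool (y ! i)) + 1) / 2 ^ n"
    by (simp add: prod_dividef)
  also have "(\<Prod>i<n. \<rho> * (sign_bool (x ! i) * sign_bool (y ! i)) + 1)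
      = (\<Sum>S\<in>Pow {..<n}. (\<Prod>i\<in>S. \<rho> * (sign_bool (x ! i) * sign_bool (y ! i))) * (\<Prod>i\<in>{..<n} - S. 1))"
    by (rule prod_add) simp
  also have "\<dots> = (\<Sum>S\<in>Pow {..<n}. \<rho> ^ card S * walsh S x * walsh S y)"
    by (intro sum.cong) (auto simp: walsh_def prod.distrib mult.assoc)
  finally show ?thesis .
qed

lemma T_noise_walsh_expansion:
  assumes "x \<in> cube n"
  shows "T_noise n \<rho> f x = (\<Sum>S\<in>Pow {..<n}. \<rho> ^ card S * fourier_coeff n f S * walsh S x)"
proof -
  have "T_noise n \<rho> f x
      = (\<Sum>y\<in>cube n. \<Sum>S\<in>Pow {..<n}. \<rho> ^ card S * walsh S x * (walsh S y * f y) / 2 ^ n)"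
    unfolding T_noise_def noise_kernel_walsh_expansion[OF assms]
    by (simp add: sum_divide_distrib sum_distrib_right mult.assoc)
  also have "\<dots> = (\<Sum>S\<in>Pow {..<n}. \<rho> ^ card S * fourier_coeff n f S * walsh S x)"
    unfolding fourier_coeff_def
    by (subst sum.swap) (simp add: sum_divide_distrib sum_distrib_left mult_ac)
  finally show ?thesis .
qed

lemma sum_T_noise: "(\<Sum>x\<in>cube n. T_noise n \<rho> f x) = 2 ^ n * fourier_coeff n f {}"
  using sum_walsh_expansion[where c = "\<lambda>S. \<rho> ^ card S * fourier_coeff n f S"]
  by (simp add: T_noise_walsh_expansion)

lemma sum_T_noise_squared:
  "(\<Sum>x\<in>cube n. (T_noise n \<rho> f x)\<^sup>2)
     = 2 ^ n * (\<Sum>S\<in>Pow {..<n}. \<rho> ^ (2 * card S) * (fourier_coeff n f S)\<^sup>2)"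
  using sum_walsh_expansion_squared[where c = "\<lambda>S. \<rho> ^ card S * fourier_coeff n f S"]
  by (simp add: T_noise_walsh_expansion power_mult_distrib power_mult[symmetric] mult.commute)

lemma sum_mult_T_noise:
  "(\<Sum>x\<in>cube n. f x * T_noise n \<rho> f x)
     = 2 ^ n * (\<Sum>S\<in>Pow {..<n}. \<rho> ^ card S * (fourier_coeff n f S)\<^sup>2)"
proof -
  have "(\<Sum>x\<in>cube n. f x * T_noise n \<rho> f x)
      = (\<Sum>S\<in>Pow {..<n}. \<rho> ^ card S * fourier_coeff n f S * (\<Sum>x\<in>cube n. walsh S x * f x))"
    by (simp add: T_noise_walsh_expansion sum_distrib_left mult_ac sum.swap[of _ "cube n"])
  also have "\<dots> = (\<Sum>S\<in>Pow {..<n}. \<rho> ^ card S * fourier_coeff n f S * (2 ^ n * fourier_coeff n f S))"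
    by (simp add: fourier_coeff_def)
  also have "\<dots> = 2 ^ n * (\<Sum>S\<in>Pow {..<n}. \<rho> ^ card S * (fourier_coeff n f S)\<^sup>2)"
    by (simp add: sum_distrib_left power2_eq_square mult_ac)
  finally show ?thesis .
qed

lemma T_noise_energy_le:
  assumes "0 \<le> \<rho>" "\<rho> \<le> 1"
  shows "(\<Sum>x\<in>cube n. (T_noise n \<rho> f x)\<^sup>2) - 2 ^ n * (fourier_coeff n f {})\<^sup>2
     \<le> \<rho> * ((\<Sum>x\<in>cube n. f x * T_noise n \<rho> f x) - 2 ^ n * (fourier_coeff n f {})\<^sup>2)"
proof -
  let ?c = "fourier_coeff n f"
  let ?P = "Pow {..<n} - {{}}"
  have split: "(\<Sum>S\<in>Pow {..<n}. g S) = g {} + (\<Sum>S\<in>?P. g S)" for g :: "nat set \<Rightarrow> real"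
    by (subst sum.remove[of _ "{}"]) auto
  have "(\<Sum>S\<in>?P. \<rho> ^ (2 * card S) * (?c S)\<^sup>2) \<le> (\<Sum>S\<in>?P. \<rho> * (\<rho> ^ card S * (?c S)\<^sup>2))"
  proof (rule sum_mono)
    fix S assume "S \<in> ?P"
    then have "1 \<le> card S" using finite_subset[of S "{..<n}"] by (auto simp: Suc_le_eq card_gt_0_iff)
    then have "\<rho> ^ (2 * card S) \<le> \<rho> ^ Suc (card S)"
      using assms by (intro power_decreasing) auto
    then show "\<rho> ^ (2 * card S) * (?c S)\<^sup>2 \<le> \<rho> * (\<rho> ^ card S * (?c S)\<^sup>2)"
      by (simp add: mult_right_mono mult.assoc[symmetric])
  qed
  then have "2 ^ n * (\<Sum>S\<in>?P. \<rho> ^ (2 * card S) * (?c S)\<^sup>2)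
      \<le> 2 ^ n * (\<rho> * (\<Sum>S\<in>?P. \<rho> ^ card S * (?c S)\<^sup>2))"
    by (intro mult_left_mono) (simp_all add: sum_distrib_left)
  then show ?thesis
    unfolding sum_T_noise_squared sum_mult_T_noise split[of "\<lambda>S. \<rho> ^ (2 * card S) * (?c S)\<^sup>2"]
      split[of "\<lambda>S. \<rho> ^ card S * (?c S)\<^sup>2"]
    by (simp add: algebra_simps)
qed

lemma T_noise_centered_energy_le:
  fixes f :: "bool list \<Rightarrow> real" and n :: nat
  assumes "0 \<le> \<rho>" "\<rho> \<le> 1"
  defines "a \<equiv> cube_mean n f"
  shows "(\<Sum>x\<in>cube n. (T_noise n \<rho> f x - a)\<^sup>2)
     \<le> \<rho> * (\<Sum>x\<in>cube n. (f x - a) * (T_noise n \<rho> f x - a))"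
proof -
  let ?T = "T_noise n \<rho> f"
  have sum_T: "(\<Sum>x\<in>cube n. ?T x) = 2 ^ n * a" and sum_f: "(\<Sum>x\<in>cube n. f x) = 2 ^ n * a"
    using sum_T_noise[of n \<rho> f] by (simp_all add: a_def fourier_coeff_empty cube_mean_def)
  have "(\<Sum>x\<in>cube n. (?T x - a)\<^sup>2) = (\<Sum>x\<in>cube n. (?T x)\<^sup>2) - 2 ^ n * a\<^sup>2"
    using sum_T by (simp add: power2_diff sum.distrib sum_subtractf sum_distrib_left[symmetric]
        card_cube power2_eq_square algebra_simps)
  moreover have "(\<Sum>x\<in>cube n. (f x - a) * (?T x - a)) = (\<Sum>x\<in>cube n. f x * ?T x) - 2 ^ n * a\<^sup>2"
    using sum_T sum_f by (simp add: algebra_simps sum.distrib sum_subtractf sum_distrib_left[symmetric]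
        card_cube power2_eq_square)
  ultimately show ?thesis
    using T_noise_energy_le[OF assms(1,2), of n f] by (simp add: a_def fourier_coeff_empty)
qed

lemma T_noise_const_one:
  assumes "x \<in> cube n"
  shows "T_noise n \<rho> (\<lambda>_. 1) x = 1"
proof -
  have "\<rho> ^ card S * fourier_coeff n (\<lambda>_. 1) S * walsh S x = (if S = {} then 1 else 0)"
    if "S \<in> Pow {..<n}" for S
    using sum_walsh[of S n] that by (simp add: fourier_coeff_def walsh_def)
  then have "T_noise n \<rho> (\<lambda>_. 1) x = (\<Sum>S\<in>Pow {..<n}. if S = {} then 1 else 0)"
    unfolding T_noise_walsh_expansion[OF assms] by (intro sum.cong) auto
  then show ?thesis by simp
qed

lemma T_noise_mem_unit_interval:
  assumes "\<bar>\<rho>\<bar> \<le> 1" "x \<in> cube n" "\<And>y. y \<in> cube n \<Longrightarrow> f y \<in> {0..1}"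
  shows "T_noise n \<rho> f x \<in> {0..1}"
proof -
  have kernel_nonneg: "0 \<le> noise_kernel \<rho> x y" for y
    unfolding noise_kernel_def using assms(1) by (intro prod_nonneg) auto
  have "0 \<le> T_noise n \<rho> f x"
    unfolding T_noise_def using assms(3) kernel_nonneg by (intro sum_nonneg mult_nonneg_nonneg) auto
  moreover have "T_noise n \<rho> f x \<le> T_noise n \<rho> (\<lambda>_. 1) x"
    unfolding T_noise_def using assms(3) kernel_nonneg by (intro sum_mono mult_left_mono) auto
  ultimately show ?thesis using T_noise_const_one[OF assms(2)] by simp
qed

subsection \<open>Conditional laws on level sets\<close>

lemma pmf_of_set_disintegrate:
  assumes "finite C" "C \<noteq> {}"
  shows "pmf_of_set C = bind_pmf (map_pmf g (pmf_of_set C)) (\<lambda>s. pmf_of_set {x \<in> C. g x = s})"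
proof (rule pmf_eqI)
  fix x
  let ?L = "\<lambda>y. {z \<in> C. g z = g y}"
  have L: "y \<in> ?L y" "finite (?L y)" if "y \<in> C" for y using that assms by auto
  have "pmf (bind_pmf (map_pmf g (pmf_of_set C)) (\<lambda>s. pmf_of_set {x \<in> C. g x = s})) x
      = (\<Sum>y\<in>C. indicator (?L y) x / card (?L y)) / card C"
    using assms L by (simp add: pmf_bind integral_pmf_of_set) (intro sum.cong refl; subst pmf_of_set; auto)
  also have "(\<Sum>y\<in>C. indicator (?L y) x / card (?L y)) = indicator C x"
  proof (cases "x \<in> C")
    case True
    have "(\<Sum>y\<in>C. indicator (?L y) x / card (?L y)) = (\<Sum>y\<in>?L x. 1 / card (?L x))"
      using assms by (intro sum.mono_neutral_cong_right) (auto simp: indicator_def True)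
    also have "\<dots> = 1" using L[OF True] by auto
    finally show ?thesis using True by simp
  qed (simp add: indicator_def)
  finally show "pmf (pmf_of_set C) x = pmf (bind_pmf (map_pmf g (pmf_of_set C)) (\<lambda>s. pmf_of_set {x \<in> C. g x = s})) x"
    using assms by simp
qed

lemma map_pmf_of_set_centered_indicator:
  assumes "finite C" "C \<noteq> {}" "\<And>x. x \<in> C \<Longrightarrow> f x \<in> {0, 1}" "sum f C / card C = a"
  shows "map_pmf (\<lambda>x. f x - a) (pmf_of_set C) = S_pmf a"
proof -
  have "sum f C = (\<Sum>x\<in>C. if f x = 1 then 1 else 0)"
    using assms(3) by (intro sum.cong) auto
  then have card1: "card {x \<in> C. f x = 1} / card C = a"
    using assms(1,4) by (simp add: sum.If_cases Int_def)
  then have "0 \<le> a" "a \<le> 1"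
    using assms(1,2) card_mono[of C "{x \<in> C. f x = 1}"] by (auto simp: divide_le_eq_1)
  have bernoulli: "map_pmf (\<lambda>x. f x = 1) (pmf_of_set C) = bernoulli_pmf a"
  proof (rule pmf_eqI)
    fix b :: bool
    have "{x \<in> C. f x \<noteq> 1} = C - {x \<in> C. f x = 1}" by auto
    then have "card {x \<in> C. f x \<noteq> 1} / card C = 1 - a"
      using assms(1,2) card1 by (simp add: card_Diff_subset diff_divide_distrib of_nat_diff card_mono)
    then show "pmf (map_pmf (\<lambda>x. f x = 1) (pmf_of_set C)) b = pmf (bernoulli_pmf a) b"
      using assms(1,2) card1 \<open>0 \<le> a\<close> \<open>a \<le> 1\<close>
      by (cases b) (simp_all add: pmf_map measure_pmf_of_set vimage_def Int_def)
  qed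
  have "map_pmf (\<lambda>x. f x - a) (pmf_of_set C)
      = map_pmf (\<lambda>b. if b then 1 - a else - a) (map_pmf (\<lambda>x. f x = 1) (pmf_of_set C))"
    unfolding pmf.map_comp using assms(1,2) by (intro map_pmf_cong) (auto dest!: assms(3))
  then show ?thesis by (simp add: bernoulli S_pmf_def)
qed

definition level_kernel :: "'b set \<Rightarrow> ('b \<Rightarrow> real) \<Rightarrow> ('b \<Rightarrow> real) \<Rightarrow> real \<Rightarrow> real pmf" where
  "level_kernel C g Z s = map_pmf Z (pmf_of_set {x \<in> C. g x = s})"

lemma joint_SZ_level_kernel:
  assumes "finite C" "C \<noteq> {}" "map_pmf g (pmf_of_set C) = S_pmf a"
  shows "joint_SZ a (level_kernel C g Z) = map_pmf (\<lambda>x. (g x, Z x)) (pmf_of_set C)"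
proof -
  have "map_pmf (\<lambda>x. (g x, Z x)) (pmf_of_set C)
      = bind_pmf (map_pmf g (pmf_of_set C)) (\<lambda>s. map_pmf (\<lambda>x. (g x, Z x)) (pmf_of_set {x \<in> C. g x = s}))"
    by (subst pmf_of_set_disintegrate[OF assms(1,2), of g]) (simp add: map_bind_pmf)
  also have "\<dots> = bind_pmf (map_pmf g (pmf_of_set C)) (\<lambda>s. map_pmf (\<lambda>z. (s, z)) (level_kernel C g Z s))"
  proof (intro bind_pmf_cong refl)
    fix s assume "s \<in> set_pmf (map_pmf g (pmf_of_set C))"
    then have "{x \<in> C. g x = s} \<noteq> {}" using assms(1,2) by auto
    then show "map_pmf (\<lambda>x. (g x, Z x)) (pmf_of_set {x \<in> C. g x = s})
        = map_pmf (\<lambda>z. (s, z)) (level_kernel C g Z s)"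
      using assms(1) unfolding level_kernel_def pmf.map_comp by (intro map_pmf_cong) auto
  qed
  finally show ?thesis by (simp add: joint_SZ_def assms(3))
qed

subsection \<open>The kernel induced by a Boolean function\<close>

definition induced_kernel :: "nat \<Rightarrow> real \<Rightarrow> (bool list \<Rightarrow> real) \<Rightarrow> real \<Rightarrow> real \<Rightarrow> real pmf" where
  "induced_kernel n \<rho> f a = level_kernel (cube n) (\<lambda>x. f x - a) (\<lambda>x. (T_noise n \<rho> f x - a) / \<rho>)"

lemma bool_funs_values: "f \<in> bool_funs n \<Longrightarrow> x \<in> cube n \<Longrightarrow> f x \<in> {0, 1}"
  unfolding bool_funs_def by (auto dest: PiE_mem)

lemma joint_SZ_induced_kernel:
  assumes "f \<in> bool_funs n" "cube_mean n f = a"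
  shows "joint_SZ a (induced_kernel n \<rho> f a)
    = map_pmf (\<lambda>x. (f x - a, (T_noise n \<rho> f x - a) / \<rho>)) (pmf_of_set (cube n))"
proof -
  have "map_pmf (\<lambda>x. f x - a) (pmf_of_set (cube n)) = S_pmf a"
    using assms bool_funs_values by (intro map_pmf_of_set_centered_indicator)
      (simp_all add: finite_cube cube_nonempty cube_mean_def card_cube)
  then show ?thesis
    unfolding induced_kernel_def by (intro joint_SZ_level_kernel finite_cube cube_nonempty)
qed

lemma expectation_joint_SZ_induced_kernel:
  fixes h :: "real \<times> real \<Rightarrow> real"
  assumes "f \<in> bool_funs n" "cube_mean n f = a"
  shows "measure_pmf.expectation (joint_SZ a (induced_kernel n \<rho> f a)) h
    = (\<Sum>x\<in>cube n. h (f x - a, (T_noise n \<rho> f x - a) / \<rho>)) / 2 ^ n"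
  by (simp add: joint_SZ_induced_kernel[OF assms] integral_pmf_of_set finite_cube cube_nonempty card_cube)

lemma induced_kernel_value:
  assumes "\<rho> \<noteq> 0" "f \<in> bool_funs n" "cube_mean n f = a"
  shows "measure_pmf.expectation (joint_SZ a (induced_kernel n \<rho> f a)) (\<lambda>(s, z). \<Phi> (a + \<rho> * z))
    = Stab \<Phi> n \<rho> f"
  using assms by (simp add: expectation_joint_SZ_induced_kernel Stab_def cube_mean_def)

lemma Gamma_feasible_induced_kernel:
  assumes "0 < \<rho>" "\<rho> \<le> 1" "f \<in> bool_funs n" "cube_mean n f = a"
  shows "Gamma_feasible \<rho> a (induced_kernel n \<rho> f a)"
proof -
  let ?T = "T_noise n \<rho> f" and ?J = "joint_SZ a (induced_kernel n \<rho> f a)"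
  note E = expectation_joint_SZ_induced_kernel[OF assms(3,4), of \<rho>]
  have range: "\<forall>(s, z) \<in> set_pmf ?J. 0 \<le> a + \<rho> * z \<and> a + \<rho> * z \<le> 1"
  proof clarify
    fix s z assume "(s, z) \<in> set_pmf ?J"
    then have "(s, z) \<in> (\<lambda>x. (f x - a, (?T x - a) / \<rho>)) ` cube n"
      by (simp only: joint_SZ_induced_kernel[OF assms(3,4)] set_map_pmf
          set_pmf_of_set[OF cube_nonempty finite_cube])
    then obtain x where x: "x \<in> cube n" and "(s, z) = (f x - a, (?T x - a) / \<rho>)" by (rule imageE)
    then have "a + \<rho> * z = ?T x" using assms(1) by simp
    moreover have "?T x \<in> {0..1}"
      using assms(1,2) x bool_funs_values[OF assms(3)] by (intro T_noise_mem_unit_interval) force+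
    ultimately show "0 \<le> a + \<rho> * z \<and> a + \<rho> * z \<le> 1" by simp
  qed
  have "(\<Sum>x\<in>cube n. ?T x - a) = 0"
    using sum_T_noise[of n \<rho> f] assms(4) by (simp add: sum_subtractf card_cube fourier_coeff_empty)
  then have mean: "measure_pmf.expectation ?J (\<lambda>(s, z). z) = 0"
    by (simp add: E sum_divide_distrib[symmetric])
  have "(\<Sum>x\<in>cube n. (?T x - a)\<^sup>2) / \<rho>\<^sup>2 \<le> \<rho> * (\<Sum>x\<in>cube n. (f x - a) * (?T x - a)) / \<rho>\<^sup>2"
    using T_noise_centered_energy_le[of \<rho> n f] assms(1,2,4) by (intro divide_right_mono) auto
  also have "\<dots> = (\<Sum>x\<in>cube n. (f x - a) * (?T x - a)) / \<rho>"
    using assms(1) by (simp add: power2_eq_square)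
  finally have "(\<Sum>x\<in>cube n. ((?T x - a) / \<rho>)\<^sup>2) \<le> (\<Sum>x\<in>cube n. (f x - a) * ((?T x - a) / \<rho>))"
    by (simp add: power_divide sum_divide_distrib[symmetric])
  then have second_moment:
    "measure_pmf.expectation ?J (\<lambda>(s, z). z\<^sup>2) \<le> measure_pmf.expectation ?J (\<lambda>(s, z). s * z)"
    by (simp add: E divide_right_mono)
  show ?thesis
    unfolding Gamma_feasible_def using range mean second_moment by blast
qed

lemma bool_funs_mean_exists:
  assumes "0 \<le> a" "a \<le> 1" "2 ^ n * a \<in> \<int>"
  obtains f where "f \<in> bool_funs n" "cube_mean n f = a"
proof -
  obtain m where m: "2 ^ n * a = of_int m" using assms(3) Ints_cases by blast
  moreover have "0 \<le> real_of_int m" unfolding m[symmetric] using assms(1) by simp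
  ultimately have "real (nat m) = 2 ^ n * a" by simp
  moreover have "2 ^ n * a \<le> card (cube n)" using assms(2) by (simp add: card_cube)
  ultimately obtain B where B: "B \<subseteq> cube n" "card B = nat m"
    using obtain_subset_with_card_n[of "nat m" "cube n"] by (metis of_nat_le_iff)
  define f where "f = restrict (\<lambda>x. if x \<in> B then 1 else 0 :: real) (cube n)"
  have "f \<in> bool_funs n" by (auto simp: f_def bool_funs_def)
  moreover have "(\<Sum>x\<in>cube n. f x) = card B"
    using B finite_cube by (simp add: f_def sum.If_cases Int_absorb1)
  then have "cube_mean n f = a" using B \<open>real (nat m) = 2 ^ n * a\<close> by (simp add: cube_mean_def)
  ultimately show ?thesis by (rule that)
qed

lemma bdd_above_Gamma_values:
  fixes \<Phi> :: "real \<Rightarrow> real"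
  assumes "continuous_on {0..1} \<Phi>"
  shows "bdd_above {measure_pmf.expectation (joint_SZ a K) (\<lambda>(s, z). \<Phi> (a + \<rho> * z)) | K. Gamma_feasible \<rho> a K}"
proof -
  obtain B where B: "\<forall>t\<in>{0..1}. \<bar>\<Phi> t\<bar> \<le> B"
    using compact_imp_bounded[OF compact_continuous_image[OF assms compact_Icc]]
    by (auto simp: bounded_iff)
  have "measure_pmf.expectation (joint_SZ a K) (\<lambda>(s, z). \<Phi> (a + \<rho> * z)) \<le> B"
    if "Gamma_feasible \<rho> a K" for K
  proof -
    have "AE p in measure_pmf (joint_SZ a K). norm ((\<lambda>(s, z). \<Phi> (a + \<rho> * z)) p) \<le> B"
      using that B unfolding Gamma_feasible_def by (intro AE_pmfI) auto
    then show ?thesis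
      by (intro measure_pmf.integral_le_const measure_pmf.integrable_const_bound)
        (auto elim: AE_mp)
  qed
  then show ?thesis by (intro bdd_aboveI[where M = B]) blast
qed

lemma Stab_le_Gamma_rho:
  fixes \<Phi> :: "real \<Rightarrow> real"
  assumes "continuous_on {0..1} \<Phi>" "0 < \<rho>" "\<rho> \<le> 1" "f \<in> bool_funs n" "cube_mean n f = a"
  shows "Stab \<Phi> n \<rho> f \<le> Gamma_rho \<Phi> \<rho> a"
proof -
  have "Stab \<Phi> n \<rho> f
      = measure_pmf.expectation (joint_SZ a (induced_kernel n \<rho> f a)) (\<lambda>(s, z). \<Phi> (a + \<rho> * z))"
    using induced_kernel_value[of \<rho> f n a \<Phi>] assms(2,4,5) by simp
  also have "\<dots> \<le> Gamma_rho \<Phi> \<rho> a"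
    unfolding Gamma_rho_def using Gamma_feasible_induced_kernel[OF assms(2-5)]
    by (intro cSup_upper[OF _ bdd_above_Gamma_values[OF assms(1)]]) auto
  finally show ?thesis .
qed

lemma finite_bool_funs: "finite (bool_funs n)"
  unfolding bool_funs_def by (intro finite_PiE finite_cube) simp

theorem theorem2p1:
  fixes \<Phi> :: "real \<Rightarrow> real" and n :: nat and \<rho> a :: real
  assumes "n \<ge> 1"
    and "0 < \<rho>" "\<rho> < 1"
    and "0 < a" "a < 1"
    and "2 ^ n * a \<in> \<int>"
    and "continuous_on {0..1} \<Phi>"
    and "strictly_convex_on {0..1} \<Phi>"
  shows "MaxStab \<Phi> n \<rho> a \<le> Gamma_rho \<Phi> \<rho> a"
proof -
  obtain f where "f \<in> bool_funs n" "cube_mean n f = a"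
    using bool_funs_mean_exists[of a n] assms(4-6) by auto
  moreover have "finite {Stab \<Phi> n \<rho> f | f. f \<in> bool_funs n \<and> cube_mean n f = a}"
    using finite_bool_funs by (intro finite_image_set) simp
  ultimately show ?thesis
    unfolding MaxStab_def using Stab_le_Gamma_rho[OF assms(7,2)] assms(3)
    by (subst Max_le_iff) auto
qed

end
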